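(* For any $\epsilon>0$ and $m\in\mathbb{N}$ there exist $d=d(\epsilon,m)\in\mathbb{N}$ and $\tau=\tau(\epsilon,m)>0$ with the following property. Let $\mathbf{P}=(P_1,\dots,P_C)$ be a sequence of polynomials $\mathbb{F}_p^n\to\mathbb{T}$ of degree at most $d$, and let $\Gamma,\widetilde{\Gamma}:\mathbb{T}^C\to[0,1]$ be functions with $\|\Gamma-\widetilde{\Gamma}\|_\infty\le\tau$. Then $\mathrm{d_{TV}}(\mu_{\Gamma\circ\mathbf{P},m},\mu_{\widetilde{\Gamma}\circ\mathbf{P},m})\le\epsilon$.
   Context: Fix a prime $p$; $\mathbb{T}=\mathbb{R}/\mathbb{Z}$. A (non-classical) polynomial $P:\mathbb{F}_p^n\to\mathbb{T}$ has degree at most $d$ if $D_{y_1}\cdots D_{y_{d+1}}P\equiv0$ where $D_hP(x)=P(x+h)-P(x)$. $(\Gamma\circ\mathbf{P})(x)=\Gamma(P_1(x),\dots,P_C(x))$. For $f:\mathbb{F}_p^n\to[0,1]$ and $m\le n$, $\mu_{f,m}$ is the distribution of $f'\circ A:\mathbb{F}_p^m\to\{0,1\}$, where $f':\mathbb{F}_p^n\to\{0,1\}$ is random with $\Pr[f'(x)=1]=f(x)$ independently for all $x$, and $A:\mathbb{F}_p^m\to\mathbb{F}_p^n$ is a uniformly random affine embedding (injective affine map), independent of $f'$. $\mathrm{d_{TV}}(\mu,\mu')=\frac12\sum_a|\mu(a)-\mu'(a)|$ is the statistical distance. *)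

theory Defs
  imports "HOL-Analysis.Analysis" "HOL-Probability.Probability"
begin

text \<open>Vectors of F_p^n are functions nat => nat with entries in {0..<p} at
  coordinates i < n and 0 at coordinates i >= n.\<close>
definition Fpn :: "nat \<Rightarrow> nat \<Rightarrow> (nat \<Rightarrow> nat) set" where
  "Fpn p n = {x. (\<forall>i<n. x i < p) \<and> (\<forall>i\<ge>n. x i = 0)}"

definition vadd :: "nat \<Rightarrow> (nat \<Rightarrow> nat) \<Rightarrow> (nat \<Rightarrow> nat) \<Rightarrow> (nat \<Rightarrow> nat)" where
  "vadd p x y = (\<lambda>i. (x i + y i) mod p)"

text \<open>The torus T = R/Z is represented by real numbers, two reals being
  identified when they differ by an integer.  D_h P (x) = P(x+h) - P(x).\<close>
definition Dh :: "nat \<Rightarrow> (nat \<Rightarrow> nat) \<Rightarrow> ((nat \<Rightarrow> nat) \<Rightarrow> real) \<Rightarrow> ((nat \<Rightarrow> nat) \<Rightarrow> real)" where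
  "Dh p h P = (\<lambda>x. P (vadd p x h) - P x)"

fun iter_D :: "nat \<Rightarrow> (nat \<Rightarrow> nat) list \<Rightarrow> ((nat \<Rightarrow> nat) \<Rightarrow> real) \<Rightarrow> ((nat \<Rightarrow> nat) \<Rightarrow> real)" where
  "iter_D p [] P = P"
| "iter_D p (y # ys) P = Dh p y (iter_D p ys P)"

text \<open>P : F_p^n -> T has degree at most d: D_{y_1}...D_{y_{d+1}} P vanishes
  identically in T, i.e. is integer-valued as a real function.\<close>
definition poly_deg_le :: "nat \<Rightarrow> nat \<Rightarrow> nat \<Rightarrow> ((nat \<Rightarrow> nat) \<Rightarrow> real) \<Rightarrow> bool" where
  "poly_deg_le p n d P \<longleftrightarrow>
     (\<forall>ys x. length ys = d + 1 \<longrightarrow> set ys \<subseteq> Fpn p n \<longrightarrow> x \<in> Fpn p n \<longrightarrow>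
        iter_D p ys P x \<in> \<int>)"

text \<open>Canonical representatives of T^C: tuples with entries in [0,1) at
  coordinates i < C and 0 beyond.\<close>
definition TC :: "nat \<Rightarrow> (nat \<Rightarrow> real) set" where
  "TC C = {t. (\<forall>i<C. 0 \<le> t i \<and> t i < 1) \<and> (\<forall>i\<ge>C. t i = 0)}"

definition compose_GP :: "nat \<Rightarrow> ((nat \<Rightarrow> real) \<Rightarrow> real) \<Rightarrow> (nat \<Rightarrow> (nat \<Rightarrow> nat) \<Rightarrow> real)
    \<Rightarrow> (nat \<Rightarrow> nat) \<Rightarrow> real" where
  "compose_GP C \<Gamma> P = (\<lambda>x. \<Gamma> (\<lambda>i. if i < C then P i x else 0))"

definition affine_embeddings :: "nat \<Rightarrow> nat \<Rightarrow> nat \<Rightarrow> ((nat \<Rightarrow> nat) \<Rightarrow> (nat \<Rightarrow> nat)) set" where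
  "affine_embeddings p m n =
     {A. \<exists>c v. c \<in> Fpn p n \<and> (\<forall>j<m. v j \<in> Fpn p n) \<and>
         A = restrict (\<lambda>y. (\<lambda>i. (c i + (\<Sum>j<m. y j * v j i)) mod p)) (Fpn p m) \<and>
         inj_on A (Fpn p m)}"

text \<open>mu_{f,m}: distribution of f' o A restricted to F_p^m (value False
  outside F_p^m), f'(x) = True with probability f x independently, A a
  uniformly random affine embedding.\<close>
definition mu :: "nat \<Rightarrow> nat \<Rightarrow> nat \<Rightarrow> ((nat \<Rightarrow> nat) \<Rightarrow> real) \<Rightarrow> ((nat \<Rightarrow> nat) \<Rightarrow> bool) pmf" where
  "mu p n m f =
     bind_pmf (pmf_of_set (affine_embeddings p m n)) (\<lambda>A.
       map_pmf (\<lambda>f'. (\<lambda>y. if y \<in> Fpn p m then f' (A y) else False))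
         (Pi_pmf (Fpn p n) False (\<lambda>x. bernoulli_pmf (f x))))"

text \<open>Statistical distance of two distributions on {0,1}^{F_p^m}.\<close>
definition dTV :: "nat \<Rightarrow> nat \<Rightarrow> ((nat \<Rightarrow> nat) \<Rightarrow> bool) pmf \<Rightarrow> ((nat \<Rightarrow> nat) \<Rightarrow> bool) pmf \<Rightarrow> real" where
  "dTV p m \<mu> \<mu>' = (1/2) * (\<Sum>a\<in>{a. \<forall>y. y \<notin> Fpn p m \<longrightarrow> \<not> a y}. \<bar>pmf \<mu> a - pmf \<mu>' a\<bar>)"

end

theory Submission
  imports Defs
begin

text \<open>Only \<open>\<tau>\<close> matters: the bound holds for any degree (take \<open>d = 0\<close>), any \<open>p\<close>, and any
  functions \<open>f, g : \<bbbF>\<^sub>p\<^sup>n \<rightarrow> [0,1]\<close> with \<open>\<bar>f - g\<bar> \<le> \<tau>\<close>. Couple the random functions \<open>f'\<close> and \<open>g'\<close>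
  pointwise and independently, so that \<open>f'(x) \<noteq> g'(x)\<close> with probability \<open>\<bar>f x - g x\<bar>\<close>. For every
  affine embedding \<open>A\<close> the pullbacks \<open>f' \<circ> A\<close> and \<open>g' \<circ> A\<close> then differ with probability at most
  \<open>p\<^sup>m \<tau>\<close> by the union bound over \<open>\<bbbF>\<^sub>p\<^sup>m\<close>, and the statistical distance of two distributions is
  at most the disagreement probability of any coupling of them.\<close>

definition bernoulli_coupling_prob :: "real \<Rightarrow> real \<Rightarrow> bool \<Rightarrow> real" where
  "bernoulli_coupling_prob a b s =
     (if s then (if a = 0 then 0 else min a b / a)
      else (if a = 1 then 0 else (b - min a b) / (1 - a)))"

text \<open>The maximal coupling of \<open>Ber(a)\<close> and \<open>Ber(b)\<close>: draw \<open>s \<sim> Ber(a)\<close>, then \<open>t\<close> with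
  the conditional law that makes \<open>t \<sim> Ber(b)\<close> and \<open>t = s\<close> as often as possible.\<close>
definition bernoulli_coupling :: "real \<Rightarrow> real \<Rightarrow> (bool \<times> bool) pmf" where
  "bernoulli_coupling a b = do {
     s \<leftarrow> bernoulli_pmf a;
     map_pmf (Pair s) (bernoulli_pmf (bernoulli_coupling_prob a b s)) }"

lemma bernoulli_coupling_prob_range:
  assumes "0 \<le> a" "a \<le> 1" "0 \<le> b" "b \<le> 1"
  shows "0 \<le> bernoulli_coupling_prob a b s" "bernoulli_coupling_prob a b s \<le> 1"
  using assms by (auto simp: bernoulli_coupling_prob_def min_def field_simps)

lemma map_fst_bernoulli_coupling: "map_pmf fst (bernoulli_coupling a b) = bernoulli_pmf a"
  by (simp add: bernoulli_coupling_def map_bind_pmf map_pmf_comp bind_return_pmf')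

lemma map_snd_bernoulli_coupling:
  assumes "0 \<le> a" "a \<le> 1" "0 \<le> b" "b \<le> 1"
  shows "map_pmf snd (bernoulli_coupling a b) = bernoulli_pmf b"
proof (rule pmf_eqI)
  fix t
  note range = bernoulli_coupling_prob_range[OF assms]
  have "map_pmf snd (bernoulli_coupling a b)
      = bernoulli_pmf a \<bind> (\<lambda>s. bernoulli_pmf (bernoulli_coupling_prob a b s))"
    by (simp add: bernoulli_coupling_def map_bind_pmf map_pmf_comp)
  moreover have "bernoulli_coupling_prob a b True * a + bernoulli_coupling_prob a b False * (1 - a) = b"
    using assms by (auto simp: bernoulli_coupling_prob_def min_def field_simps)
  ultimately show "pmf (map_pmf snd (bernoulli_coupling a b)) t = pmf (bernoulli_pmf b) t"
    using assms range by (cases t) (auto simp: pmf_bind algebra_simps)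
qed

lemma measure_bernoulli_coupling_disagree:
  assumes "0 \<le> a" "a \<le> 1" "0 \<le> b" "b \<le> 1"
  shows "measure (bernoulli_coupling a b) {z. fst z \<noteq> snd z} = \<bar>a - b\<bar>"
proof -
  note range = bernoulli_coupling_prob_range[OF assms]
  have "measure (bernoulli_coupling a b) {z. fst z \<noteq> snd z}
      = pmf (map_pmf (\<lambda>z. fst z \<noteq> snd z) (bernoulli_coupling a b)) True"
    by (simp add: pmf_map vimage_def)
  also have "map_pmf (\<lambda>z. fst z \<noteq> snd z) (bernoulli_coupling a b)
      = bernoulli_pmf a \<bind> (\<lambda>s. map_pmf ((\<noteq>) s) (bernoulli_pmf (bernoulli_coupling_prob a b s)))"
    by (simp add: bernoulli_coupling_def map_bind_pmf map_pmf_comp)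
  also have "pmf \<dots> True
      = (1 - bernoulli_coupling_prob a b True) * a + bernoulli_coupling_prob a b False * (1 - a)"
  proof -
    have events: "Collect Not = {False}" "{t. t} = {True}" by auto
    show ?thesis
      using assms range by (simp add: events pmf_bind pmf_map vimage_def measure_pmf_single)
  qed
  also have "\<dots> = \<bar>a - b\<bar>"
    using assms by (auto simp: bernoulli_coupling_prob_def min_def field_simps)
  finally show ?thesis .
qed

lemma sum_abs_pmf_marginals_le:
  fixes W :: "('a \<times> 'a) pmf"
  assumes "finite \<Omega>"
  shows "(\<Sum>a\<in>\<Omega>. \<bar>pmf (map_pmf fst W) a - pmf (map_pmf snd W) a\<bar>)
           \<le> 2 * measure W {z. fst z \<noteq> snd z}"
proof -
  define D where "D = {z::'a \<times> 'a. fst z \<noteq> snd z}"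
  define F where "F a = {z. fst z = a} \<inter> D" for a
  define G where "G a = {z. snd z = a} \<inter> D" for a
  define E where "E a = {z. fst z = a \<and> snd z = a}" for a :: 'a
  have fst_split: "pmf (map_pmf fst W) a = measure W (F a) + measure W (E a)" for a
  proof -
    have "{z. fst z = a} = F a \<union> E a" "F a \<inter> E a = {}" by (auto simp: F_def E_def D_def)
    then show ?thesis by (simp add: pmf_map vimage_def measure_pmf.finite_measure_Union)
  qed
  have snd_split: "pmf (map_pmf snd W) a = measure W (G a) + measure W (E a)" for a
  proof -
    have "{z. snd z = a} = G a \<union> E a" "G a \<inter> E a = {}" by (auto simp: G_def E_def D_def)
    then show ?thesis by (simp add: pmf_map vimage_def measure_pmf.finite_measure_Union)
  qed
  have disjoint_union_le: "(\<Sum>a\<in>\<Omega>. measure W (H a)) \<le> measure W D"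
    if "disjoint_family_on H \<Omega>" "\<And>a. H a \<subseteq> D" for H
  proof -
    have "(\<Sum>a\<in>\<Omega>. measure W (H a)) = measure W (\<Union>a\<in>\<Omega>. H a)"
      using that assms by (simp add: measure_pmf.finite_measure_finite_Union)
    also have "\<dots> \<le> measure W D"
      using that by (intro measure_pmf.finite_measure_mono) auto
    finally show ?thesis .
  qed
  have "(\<Sum>a\<in>\<Omega>. \<bar>pmf (map_pmf fst W) a - pmf (map_pmf snd W) a\<bar>)
      \<le> (\<Sum>a\<in>\<Omega>. measure W (F a)) + (\<Sum>a\<in>\<Omega>. measure W (G a))"
    unfolding sum.distrib[symmetric] by (intro sum_mono) (simp add: fst_split snd_split abs_le_iff)
  also have "\<dots> \<le> measure W D + measure W D"
    by (intro add_mono disjoint_union_le) (auto simp: disjoint_family_on_def F_def G_def)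
  finally show ?thesis by (simp add: D_def)
qed

lemma measure_bind_pmf_le:
  fixes N :: "'a \<Rightarrow> 'b pmf"
  assumes "\<And>x. measure (N x) X \<le> c"
  shows "measure (bind_pmf M N) X \<le> c"
proof -
  have "0 \<le> c" using assms[of undefined] by (meson measure_nonneg order_trans)
  have "emeasure (bind_pmf M N) X = (\<integral>\<^sup>+x. emeasure (N x) X \<partial>M)" by simp
  also have "\<dots> \<le> (\<integral>\<^sup>+x. ennreal c \<partial>M)"
    by (intro nn_integral_mono) (simp add: measure_pmf.emeasure_eq_measure ennreal_leI assms)
  also have "\<dots> = ennreal c" by (simp add: measure_pmf.emeasure_space_1)
  finally show ?thesis by (simp add: measure_pmf.emeasure_eq_measure \<open>0 \<le> c\<close>)
qed

lemma measure_Pi_pmf_pullbacks_disagree_le: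
  fixes K :: "'b \<Rightarrow> (bool \<times> bool) pmf"
  assumes "finite S" "finite Y"
  shows "measure (Pi_pmf S (False, False) K)
           {h. (\<lambda>y. y \<in> Y \<and> fst (h (A y))) \<noteq> (\<lambda>y. y \<in> Y \<and> snd (h (A y)))}
         \<le> (\<Sum>y\<in>Y. if A y \<in> S then measure (K (A y)) {z. fst z \<noteq> snd z} else 0)"
proof -
  let ?M = "Pi_pmf S (False, False) K"
  have "measure ?M {h. (\<lambda>y. y \<in> Y \<and> fst (h (A y))) \<noteq> (\<lambda>y. y \<in> Y \<and> snd (h (A y)))}
      \<le> measure ?M (\<Union>y\<in>Y. {h. fst (h (A y)) \<noteq> snd (h (A y))})"
    by (rule measure_pmf.finite_measure_mono) (auto simp: fun_eq_iff)
  also have "\<dots> \<le> (\<Sum>y\<in>Y. measure ?M {h. fst (h (A y)) \<noteq> snd (h (A y))})"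
    using assms by (intro measure_pmf.finite_measure_subadditive_finite) auto
  also have "\<dots> = (\<Sum>y\<in>Y. if A y \<in> S then measure (K (A y)) {z. fst z \<noteq> snd z} else 0)"
  proof (rule sum.cong[OF refl])
    fix y
    have "measure ?M {h. fst (h (A y)) \<noteq> snd (h (A y))}
        = measure (map_pmf (\<lambda>h. h (A y)) ?M) {z. fst z \<noteq> snd z}"
      by (simp add: vimage_def)
    then show "measure ?M {h. fst (h (A y)) \<noteq> snd (h (A y))}
        = (if A y \<in> S then measure (K (A y)) {z. fst z \<noteq> snd z} else 0)"
      by (simp add: Pi_pmf_component[OF \<open>finite S\<close>])
  qed
  finally show ?thesis .
qed

lemma finite_Fpn: "finite (Fpn p n)"
proof -
  have "finite {x. \<forall>i. (i \<in> {..<n} \<longrightarrow> x i \<in> {..<p}) \<and> (i \<notin> {..<n} \<longrightarrow> x i = 0)}"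
    by (intro finite_set_of_finite_funs finite_lessThan)
  moreover have "Fpn p n = {x. \<forall>i. (i \<in> {..<n} \<longrightarrow> x i \<in> {..<p}) \<and> (i \<notin> {..<n} \<longrightarrow> x i = 0)}"
    unfolding Fpn_def by (auto simp: not_less)
  ultimately show ?thesis by simp
qed

lemma finite_bool_funs_supported_on:
  "finite Y \<Longrightarrow> finite {a :: 'a \<Rightarrow> bool. \<forall>y. y \<notin> Y \<longrightarrow> \<not> a y}"
  using finite_set_of_finite_funs[of Y UNIV False] by simp

text \<open>The joint law of \<open>(f' \<circ> A, g' \<circ> A)\<close>, where \<open>(f'(x), g'(x))\<close> are drawn independently
  from the maximal couplings of \<open>Ber(f x)\<close> and \<open>Ber(g x)\<close>.\<close>
definition mu_coupling ::
    "nat \<Rightarrow> nat \<Rightarrow> nat \<Rightarrow> ((nat \<Rightarrow> nat) \<Rightarrow> real) \<Rightarrow> ((nat \<Rightarrow> nat) \<Rightarrow> real)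
      \<Rightarrow> (((nat \<Rightarrow> nat) \<Rightarrow> bool) \<times> ((nat \<Rightarrow> nat) \<Rightarrow> bool)) pmf" where
  "mu_coupling p n m f g = do {
     A \<leftarrow> pmf_of_set (affine_embeddings p m n);
     map_pmf (\<lambda>h. (\<lambda>y. y \<in> Fpn p m \<and> fst (h (A y)), \<lambda>y. y \<in> Fpn p m \<and> snd (h (A y))))
       (Pi_pmf (Fpn p n) (False, False) (\<lambda>x. bernoulli_coupling (f x) (g x))) }"

lemma mu_eq_map_Pi_pmf:
  assumes "Pi_pmf (Fpn p n) False (\<lambda>x. bernoulli_pmf (f x)) = map_pmf (\<lambda>h. \<pi> \<circ> h) Q"
  shows "mu p n m f = pmf_of_set (affine_embeddings p m n) \<bind>
           (\<lambda>A. map_pmf (\<lambda>h. \<lambda>y. y \<in> Fpn p m \<and> \<pi> (h (A y))) Q)"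
  unfolding mu_def assms map_pmf_comp by (intro bind_pmf_cong map_pmf_cong) auto

lemma map_fst_mu_coupling: "map_pmf fst (mu_coupling p n m f g) = mu p n m f"
proof -
  have "Pi_pmf (Fpn p n) False (\<lambda>x. bernoulli_pmf (f x))
      = Pi_pmf (Fpn p n) False (\<lambda>x. map_pmf fst (bernoulli_coupling (f x) (g x)))"
    by (simp add: map_fst_bernoulli_coupling)
  also have "\<dots> = map_pmf (\<lambda>h. fst \<circ> h)
                    (Pi_pmf (Fpn p n) (False, False) (\<lambda>x. bernoulli_coupling (f x) (g x)))"
    by (simp add: Pi_pmf_map[OF finite_Fpn])
  finally show ?thesis
    by (simp add: mu_eq_map_Pi_pmf mu_coupling_def map_bind_pmf map_pmf_comp)
qed

lemma map_snd_mu_coupling: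
  assumes "\<forall>x\<in>Fpn p n. 0 \<le> f x \<and> f x \<le> 1 \<and> 0 \<le> g x \<and> g x \<le> 1"
  shows "map_pmf snd (mu_coupling p n m f g) = mu p n m g"
proof -
  have "Pi_pmf (Fpn p n) False (\<lambda>x. bernoulli_pmf (g x))
      = Pi_pmf (Fpn p n) False (\<lambda>x. map_pmf snd (bernoulli_coupling (f x) (g x)))"
    using assms by (intro Pi_pmf_cong) (auto simp: map_snd_bernoulli_coupling)
  also have "\<dots> = map_pmf (\<lambda>h. snd \<circ> h)
                    (Pi_pmf (Fpn p n) (False, False) (\<lambda>x. bernoulli_coupling (f x) (g x)))"
    by (simp add: Pi_pmf_map[OF finite_Fpn])
  finally show ?thesis
    by (simp add: mu_eq_map_Pi_pmf mu_coupling_def map_bind_pmf map_pmf_comp)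
qed

lemma measure_mu_coupling_disagree_le:
  assumes "\<forall>x\<in>Fpn p n. 0 \<le> f x \<and> f x \<le> 1 \<and> 0 \<le> g x \<and> g x \<le> 1"
    and "\<forall>x\<in>Fpn p n. \<bar>f x - g x\<bar> \<le> \<tau>" and "0 \<le> \<tau>"
  shows "measure (mu_coupling p n m f g) {z. fst z \<noteq> snd z} \<le> real (card (Fpn p m)) * \<tau>"
  unfolding mu_coupling_def
proof (rule measure_bind_pmf_le)
  fix A :: "(nat \<Rightarrow> nat) \<Rightarrow> nat \<Rightarrow> nat"
  let ?K = "\<lambda>x. bernoulli_coupling (f x) (g x)"
  have "measure (Pi_pmf (Fpn p n) (False, False) ?K)
          {h. (\<lambda>y. y \<in> Fpn p m \<and> fst (h (A y))) \<noteq> (\<lambda>y. y \<in> Fpn p m \<and> snd (h (A y)))}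
      \<le> (\<Sum>y\<in>Fpn p m. if A y \<in> Fpn p n then measure (?K (A y)) {z. fst z \<noteq> snd z} else 0)"
    by (intro measure_Pi_pmf_pullbacks_disagree_le finite_Fpn)
  also have "\<dots> \<le> (\<Sum>y\<in>Fpn p m. \<tau>)"
    using assms
    by (intro sum_mono) (auto simp del: not_iff simp add: measure_bernoulli_coupling_disagree)
  finally show "measure (map_pmf (\<lambda>h. (\<lambda>y. y \<in> Fpn p m \<and> fst (h (A y)),
                                      \<lambda>y. y \<in> Fpn p m \<and> snd (h (A y)))) (Pi_pmf (Fpn p n) (False, False) ?K))
                  {z. fst z \<noteq> snd z} \<le> real (card (Fpn p m)) * \<tau>"
    by (simp add: vimage_def)
qed

lemma dTV_mu_le:
  assumes "\<forall>x\<in>Fpn p n. 0 \<le> f x \<and> f x \<le> 1 \<and> 0 \<le> g x \<and> g x \<le> 1"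
    and "\<forall>x\<in>Fpn p n. \<bar>f x - g x\<bar> \<le> \<tau>" and "0 \<le> \<tau>"
  shows "dTV p m (mu p n m f) (mu p n m g) \<le> real (card (Fpn p m)) * \<tau>"
proof -
  let ?W = "mu_coupling p n m f g"
  have "dTV p m (mu p n m f) (mu p n m g)
      = 1/2 * (\<Sum>a\<in>{a. \<forall>y. y \<notin> Fpn p m \<longrightarrow> \<not> a y}.
                 \<bar>pmf (map_pmf fst ?W) a - pmf (map_pmf snd ?W) a\<bar>)"
    by (simp add: dTV_def map_fst_mu_coupling map_snd_mu_coupling[OF assms(1)])
  also have "\<dots> \<le> 1/2 * (2 * measure ?W {z. fst z \<noteq> snd z})"
    by (intro mult_left_mono sum_abs_pmf_marginals_le finite_bool_funs_supported_on finite_Fpn) simp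
  also have "\<dots> \<le> real (card (Fpn p m)) * \<tau>"
    using measure_mu_coupling_disagree_le[OF assms] by simp
  finally show ?thesis .
qed

lemma dTV_mu_compose_GP_le:
  assumes P: "\<forall>i<C. \<forall>x\<in>Fpn p n. 0 \<le> P i x \<and> P i x < 1"
    and \<Gamma>: "\<forall>t\<in>TC C. 0 \<le> \<Gamma> t \<and> \<Gamma> t \<le> 1 \<and> 0 \<le> \<Gamma>' t \<and> \<Gamma>' t \<le> 1"
    and \<Gamma>_close: "\<forall>t\<in>TC C. \<bar>\<Gamma> t - \<Gamma>' t\<bar> \<le> \<tau>" and "0 \<le> \<tau>"
  shows "dTV p m (mu p n m (compose_GP C \<Gamma> P)) (mu p n m (compose_GP C \<Gamma>' P))
           \<le> real (card (Fpn p m)) * \<tau>"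
proof (rule dTV_mu_le)
  have TC: "(\<lambda>i. if i < C then P i x else 0) \<in> TC C" if "x \<in> Fpn p n" for x
    using P that by (auto simp: TC_def)
  show "\<forall>x\<in>Fpn p n. 0 \<le> compose_GP C \<Gamma> P x \<and> compose_GP C \<Gamma> P x \<le> 1
                    \<and> 0 \<le> compose_GP C \<Gamma>' P x \<and> compose_GP C \<Gamma>' P x \<le> 1"
    using \<Gamma> TC by (simp add: compose_GP_def)
  show "\<forall>x\<in>Fpn p n. \<bar>compose_GP C \<Gamma> P x - compose_GP C \<Gamma>' P x\<bar> \<le> \<tau>"
    using \<Gamma>_close TC by (simp add: compose_GP_def)
qed fact

theorem lemma5p3:
  fixes p :: nat
  assumes "prime p"
  shows "\<forall>(\<epsilon>::real) > 0. \<forall>m::nat. \<exists>(d::nat) (\<tau>::real). \<tau> > 0 \<and>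
    (\<forall>(n::nat) (C::nat) (P :: nat \<Rightarrow> (nat \<Rightarrow> nat) \<Rightarrow> real)
       (\<Gamma> :: (nat \<Rightarrow> real) \<Rightarrow> real) (\<Gamma>' :: (nat \<Rightarrow> real) \<Rightarrow> real).
       m \<le> n \<longrightarrow>
       (\<forall>i<C. poly_deg_le p n d (P i) \<and> (\<forall>x\<in>Fpn p n. 0 \<le> P i x \<and> P i x < 1)) \<longrightarrow>
       (\<forall>t\<in>TC C. 0 \<le> \<Gamma> t \<and> \<Gamma> t \<le> 1 \<and> 0 \<le> \<Gamma>' t \<and> \<Gamma>' t \<le> 1) \<longrightarrow>
       (\<forall>t\<in>TC C. \<bar>\<Gamma> t - \<Gamma>' t\<bar> \<le> \<tau>) \<longrightarrow>
       dTV p m (mu p n m (compose_GP C \<Gamma> P)) (mu p n m (compose_GP C \<Gamma>' P)) \<le> \<epsilon>)"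
proof (intro allI impI, goal_cases)
  case (1 \<epsilon> m)
  define \<tau> where "\<tau> = \<epsilon> / (real (card (Fpn p m)) + 1)"
  have "\<tau> > 0" using \<open>\<epsilon> > 0\<close> by (simp add: \<tau>_def)
  have small: "real (card (Fpn p m)) * \<tau> \<le> \<epsilon>"
    using \<open>\<epsilon> > 0\<close> by (simp add: \<tau>_def field_simps)
  show ?case
    using \<open>\<tau> > 0\<close> order_trans[OF dTV_mu_compose_GP_le small]
    by (intro exI[of _ 0] exI[of _ \<tau>]) simp
qed

end
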